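(* Let $\mathbb{K}\in\{\mathbb{R},\mathbb{C}\}$, $d\ge4$, let $g\in\mathsf{GL}_d(\mathbb{K})$ satisfy $\sigma_d(g)=\sigma_1(g)^{-1}$, and let $0<\epsilon<\frac{2}{d-1}$. Then there exists $k\in\{1,\dots,d-1\}$ such that $\sigma_k(g)\ge\sigma_1(g)^{1-d\epsilon}$ and $\frac{\sigma_k}{\sigma_{k+1}}(g)\ge\sigma_1(g)^{\epsilon}$.
   Context: $\sigma_1(g)\ge\dots\ge\sigma_d(g)$ are the singular values of $g$ and $\frac{\sigma_i}{\sigma_j}(g)=\sigma_i(g)/\sigma_j(g)$. *)

theory Defs
  imports "Jordan_Normal_Form.Schur_Decomposition" "HOL-Computational_Algebra.Fundamental_Theorem_Algebra"
begin

definition singular_values :: "complex mat \<Rightarrow> real list" where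
  "singular_values g = rev (sorted_list_of_multiset
     (image_mset (\<lambda>z. sqrt (Re z)) (proots (char_poly (mat_adjoint g * g)))))"

(* sigma g i = \<sigma>_i(g), 1-based index, for i \<in> {1..d} *)
definition sigma :: "complex mat \<Rightarrow> nat \<Rightarrow> real" where
  "sigma g i = singular_values g ! (i - 1)"

(* Real matrices: singular values are those of the matrix viewed over \<complex>
   (g^T g and its complexification have the same characteristic polynomial). *)
definition sigma_real :: "real mat \<Rightarrow> nat \<Rightarrow> real" where
  "sigma_real g i = sigma (map_mat complex_of_real g) i"

end

theory Submission
  imports Defs
begin

text \<open>Write \<open>\<sigma> = \<sigma>\<^sub>1(g) \<ge> 1\<close>. If no index works, then \<open>\<sigma>\<^sub>k \<ge> \<sigma>\<^bsup>1-(k-1)\<epsilon>\<^esup>\<close> makes the first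
  condition hold at \<open>k\<close>, so the second fails and \<open>\<sigma>\<^sub>k\<^sub>+\<^sub>1 > \<sigma>\<^sub>k / \<sigma>\<^sup>\<epsilon> \<ge> \<sigma>\<^bsup>1-k\<epsilon>\<^esup>\<close>.
  Inductively \<open>\<sigma>\<^sub>d > \<sigma>\<^bsup>1-(d-1)\<epsilon>\<^esup> \<ge> \<sigma>\<^sup>-\<^sup>1\<close> because \<open>(d-1)\<epsilon> \<le> 2\<close>, contradicting
  \<open>\<sigma>\<^sub>d = \<sigma>\<^sup>-\<^sup>1\<close>. Only the monotonicity and nonnegativity of singular values enter.\<close>

lemma mat_adjoint_eq_transpose_conjugate:
  "mat_adjoint A = transpose_mat (map_mat conjugate A)"
  unfolding mat_adjoint_def by (intro eq_matI) (auto simp: mat_of_rows_def)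

lemma conjugate_mult_mat_vec:
  fixes A :: "'a :: conjugatable_ring mat"
  assumes "A \<in> carrier_mat n m" and "v \<in> carrier_vec m"
  shows "map_mat conjugate A *\<^sub>v conjugate v = conjugate (A *\<^sub>v v)"
  using assms by (intro eq_vecI) (auto simp: scalar_prod_def sum_conjugate conjugate_dist_mul)

lemma adjoint_cscalar_prod:
  fixes A :: "'a :: conjugatable_field mat"
  assumes A: "A \<in> carrier_mat n m" and v: "v \<in> carrier_vec m" and w: "w \<in> carrier_vec n"
  shows "(mat_adjoint A *\<^sub>v w) \<bullet>c v = w \<bullet>c (A *\<^sub>v v)"
  using A v w
  by (simp add: mat_adjoint_eq_transpose_conjugate transpose_vec_mult_scalar[of _ n m]
      conjugate_mult_mat_vec[OF A v])

lemma adjoint_mult_eigenvalue_nonneg: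
  fixes A :: "complex mat"
  assumes A: "A \<in> carrier_mat n n" and z: "eigenvalue (mat_adjoint A * A) z"
  shows "z \<ge> 0"
proof -
  have adj: "mat_adjoint A \<in> carrier_mat n n"
    using A by (simp add: mat_adjoint_eq_transpose_conjugate)
  obtain v where v: "v \<in> carrier_vec n" "v \<noteq> 0\<^sub>v n" and eig: "(mat_adjoint A * A) *\<^sub>v v = z \<cdot>\<^sub>v v"
    using z A adj unfolding eigenvalue_def eigenvector_def by auto
  have "z * (v \<bullet>c v) = (mat_adjoint A *\<^sub>v (A *\<^sub>v v)) \<bullet>c v"
    using eig v A adj by (simp add: assoc_mult_mat_vec[of _ n n _ n])
  also have "\<dots> = (A *\<^sub>v v) \<bullet>c (A *\<^sub>v v)"
    using A v by (simp add: adjoint_cscalar_prod)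
  finally have "z = ((A *\<^sub>v v) \<bullet>c (A *\<^sub>v v)) / (v \<bullet>c v)"
    using v by (simp add: eq_divide_eq)
  moreover have "v \<bullet>c v > 0" using v by simp
  moreover have "(A *\<^sub>v v) \<bullet>c (A *\<^sub>v v) \<ge> 0" by (rule conjugate_square_ge_0_vec)
  ultimately show ?thesis
    by (auto simp: less_eq_complex_def less_complex_def Re_divide Im_divide)
qed

lemma length_singular_values:
  assumes "g \<in> carrier_mat n n"
  shows "length (singular_values g) = n"
proof -
  have "degree (char_poly (mat_adjoint g * g)) = n"
    using assms degree_monic_char_poly[of "mat_adjoint g * g" n]
    by (simp add: mat_adjoint_eq_transpose_conjugate)
  then show ?thesis
    unfolding singular_values_def
    by (metis length_rev mset_sorted_list_of_multiset size_image_mset size_mset size_proots_complex)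
qed

lemma singular_values_sorted: "sorted_wrt (\<ge>) (singular_values g)"
  by (simp add: singular_values_def sorted_wrt_rev)

text \<open>HOL's \<^const>\<open>sqrt\<close> is negative on negative arguments, so this needs the eigenvalues
  of \<open>g\<^sup>* g\<close> to be nonnegative.\<close>

lemma singular_values_nonneg:
  assumes g: "g \<in> carrier_mat n n" and x: "x \<in> set (singular_values g)"
  shows "0 \<le> x"
proof -
  have B: "mat_adjoint g * g \<in> carrier_mat n n"
    using g by (simp add: mat_adjoint_eq_transpose_conjugate)
  obtain z where z: "z \<in># proots (char_poly (mat_adjoint g * g))" and "x = sqrt (Re z)"
    using x by (auto simp: singular_values_def)
  moreover have "char_poly (mat_adjoint g * g) \<noteq> 0"
    using degree_monic_char_poly[OF B] by auto
  with z have "eigenvalue (mat_adjoint g * g) z"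
    using eigenvalue_root_char_poly[OF B] by simp
  then have "Re z \<ge> 0"
    using adjoint_mult_eigenvalue_nonneg[OF g] by (simp add: less_eq_complex_def)
  ultimately show ?thesis by simp
qed

lemma sigma_antimono:
  assumes "g \<in> carrier_mat d d" and "1 \<le> i" and "i \<le> j" and "j \<le> d"
  shows "sigma g j \<le> sigma g i"
proof (cases "i = j")
  case False
  then show ?thesis
    using assms singular_values_sorted[of g] length_singular_values[of g d]
    by (auto simp: sigma_def intro: sorted_wrt_nth_less)
qed simp

lemma sigma_nonneg:
  assumes "g \<in> carrier_mat d d" and "1 \<le> i" and "i \<le> d"
  shows "0 \<le> sigma g i"
  using assms length_singular_values[of g d]
  by (auto simp: sigma_def intro: singular_values_nonneg)

lemma antimono_exists_large_gap:
  fixes s :: "nat \<Rightarrow> real"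
  assumes d: "2 \<le> d" and \<epsilon>: "0 \<le> \<epsilon>" "(real d - 1) * \<epsilon> \<le> 2"
    and antimono: "\<And>i j. 1 \<le> i \<Longrightarrow> i \<le> j \<Longrightarrow> j \<le> d \<Longrightarrow> s j \<le> s i"
    and nonneg: "0 \<le> s d" and last: "s d = 1 / s 1"
  shows "\<exists>k\<in>{1..d-1}. s k \<ge> s 1 powr (1 - real d * \<epsilon>) \<and> s k / s (k+1) \<ge> s 1 powr \<epsilon>"
proof (cases "s 1 = 0")
  case True
  \<comment> \<open>junk case \<open>s d = 1 / 0 = 0\<close>: then \<open>k = 1\<close> works, as \<open>0 powr _ = 0\<close>\<close>
  then show ?thesis using d by (intro bexI[of _ 1]) auto
next
  case False
  define \<sigma> where "\<sigma> = s 1"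
  have "s d \<le> \<sigma>" using antimono[of 1 d] d by (simp add: \<sigma>_def)
  with False nonneg have \<sigma>_pos: "0 < \<sigma>" by (simp add: \<sigma>_def)
  have sd_pos: "0 < s d" using last \<sigma>_pos by (simp add: \<sigma>_def)
  have "1 / \<sigma> \<le> \<sigma>" using \<open>s d \<le> \<sigma>\<close> last by (simp add: \<sigma>_def)
  with \<sigma>_pos have \<sigma>_ge_1: "1 \<le> \<sigma>" by (smt (verit) le_divide_eq_1)
  show ?thesis
  proof (rule ccontr)
    assume no_gap: "\<not> ?thesis"
    have descent: "\<sigma> powr (1 - real k * \<epsilon>) < s (k+1)"
      if k: "1 \<le> k" "k \<le> d - 1" and large: "\<sigma> powr (1 - (real k - 1) * \<epsilon>) \<le> s k" for k
    proof -
      have "(real k - 1) * \<epsilon> \<le> real d * \<epsilon>"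
        using k \<epsilon> by (intro mult_right_mono) auto
      then have "\<sigma> powr (1 - real d * \<epsilon>) \<le> \<sigma> powr (1 - (real k - 1) * \<epsilon>)"
        using \<sigma>_ge_1 by (intro powr_mono) auto
      with large no_gap k have "s k / s (k+1) < \<sigma> powr \<epsilon>"
        by (force simp: \<sigma>_def)
      moreover have "0 < s (k+1)"
        using antimono[of "k+1" d] k sd_pos by fastforce
      ultimately have "s k < \<sigma> powr \<epsilon> * s (k+1)"
        by (simp add: divide_less_eq)
      moreover have "\<sigma> powr (1 - (real k - 1) * \<epsilon>) = \<sigma> powr \<epsilon> * \<sigma> powr (1 - real k * \<epsilon>)"
        by (simp add: powr_add[symmetric] algebra_simps)
      ultimately have "\<sigma> powr \<epsilon> * \<sigma> powr (1 - real k * \<epsilon>) < \<sigma> powr \<epsilon> * s (k+1)"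
        using large by linarith
      then show ?thesis
        using \<sigma>_pos by simp
    qed
    have lower: "\<sigma> powr (1 - real k * \<epsilon>) \<le> s (k+1)" if "k + 1 \<le> d" for k
      using that
    proof (induction k)
      case 0
      then show ?case using \<sigma>_pos by (simp add: \<sigma>_def)
    next
      case (Suc k)
      then show ?case using descent[of "k+1"] by fastforce
    qed
    have "\<sigma> powr (1 - real (d-1) * \<epsilon>) < s d"
      using descent[of "d-1"] lower[of "d-2"] d by (simp add: of_nat_diff numeral_2_eq_2 Suc_diff_Suc)
    moreover have "\<sigma> powr (-1) \<le> \<sigma> powr (1 - real (d-1) * \<epsilon>)"
      using \<sigma>_ge_1 \<epsilon> d by (intro powr_mono) (auto simp: of_nat_diff)
    ultimately show False
      using last \<sigma>_pos by (simp add: \<sigma>_def powr_minus divide_inverse)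
  qed
qed

lemma sigma_exists_large_gap:
  assumes g: "g \<in> carrier_mat d d" and d: "2 \<le> d"
    and \<epsilon>: "0 \<le> \<epsilon>" "(real d - 1) * \<epsilon> \<le> 2" and last: "sigma g d = 1 / sigma g 1"
  shows "\<exists>k\<in>{1..d-1}. sigma g k \<ge> sigma g 1 powr (1 - real d * \<epsilon>) \<and>
                      sigma g k / sigma g (k+1) \<ge> sigma g 1 powr \<epsilon>"
  using d by (intro antimono_exists_large_gap[OF d \<epsilon> _ _ last] sigma_antimono[OF g] sigma_nonneg[OF g]) auto

theorem lemma4p3:
  fixes d :: nat and \<epsilon> :: real
  assumes "d \<ge> 4" and "0 < \<epsilon>" and "\<epsilon> < 2 / (real d - 1)"
  shows "(\<forall>g :: real mat. g \<in> carrier_mat d d \<longrightarrow> det g \<noteq> 0 \<longrightarrow>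
            sigma_real g d = 1 / sigma_real g 1 \<longrightarrow>
            (\<exists>k\<in>{1..d-1}. sigma_real g k \<ge> sigma_real g 1 powr (1 - real d * \<epsilon>) \<and>
                           sigma_real g k / sigma_real g (k+1) \<ge> sigma_real g 1 powr \<epsilon>))
       \<and> (\<forall>g :: complex mat. g \<in> carrier_mat d d \<longrightarrow> det g \<noteq> 0 \<longrightarrow>
            sigma g d = 1 / sigma g 1 \<longrightarrow>
            (\<exists>k\<in>{1..d-1}. sigma g k \<ge> sigma g 1 powr (1 - real d * \<epsilon>) \<and>
                           sigma g k / sigma g (k+1) \<ge> sigma g 1 powr \<epsilon>))"
proof -
  have d: "2 \<le> d" using assms(1) by simp
  have \<epsilon>: "0 \<le> \<epsilon>" "(real d - 1) * \<epsilon> \<le> 2"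
    using assms by (simp_all add: less_divide_eq mult.commute)
  show ?thesis
    unfolding sigma_real_def
    using sigma_exists_large_gap[OF _ d \<epsilon>] by auto
qed

end
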